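(* Let $\widetilde{\mathrm{Sp}}_{2r}^{(n)}$ be the $n$-fold Brylinski--Deligne cover of $\mathrm{Sp}_{2r}$ associated with the Weyl-invariant quadratic form $Q$ on the cocharacter lattice $Y$ normalized by $Q(\alpha_r^\vee)=1$, where $\alpha_r$ is the long simple root. If $4\mid n$, then $\widetilde{\mathrm{Sp}}_{2r}^{(n)}$ is persistent.
   Context: Root datum $(X,\Phi,\Delta;Y,\Phi^\vee,\Delta^\vee)$ of $\mathrm{Sp}_{2r}$, Weyl group $W$, $\rho^\vee$ the half-sum of positive coroots. $B_Q(y,z)=Q(y+z)-Q(y)-Q(z)$, $Y_{Q,n}=\{y\in Y:B_Q(y,z)\in n\mathbf Z\ \forall z\in Y\}$, $n_\alpha=n/\gcd(n,Q(\alpha^\vee))$, $Y^{sc}_{Q,n}$ the lattice spanned by $\{n_\alpha\alpha^\vee:\alpha\in\Delta\}$. $W$ acts on $\mathscr X_{Q,n}=Y/Y_{Q,n}$ and $\mathscr X^{sc}_{Q,n}=Y/Y^{sc}_{Q,n}$ by the twisted action $w[y]=w(y-\rho^\vee)+\rho^\vee$. The cover is persistent if for every $y\in Y$, the stabilizer in $W$ of the image of $y$ in $\mathscr X^{sc}_{Q,n}$ equals the stabilizer of the image of $y$ in $\mathscr X_{Q,n}$. *)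

theory Defs
  imports Complex_Main "HOL-Library.Function_Algebras"
begin

text \<open>Vectors of X and Y (and their rational
  extensions) are functions nat => rat supported on the coordinates 0..r-1; the standard
  basis vector e_i is sp_e i. Coordinates are 0-indexed, so the long simple root alpha_r
  of the paper is 2 e_{r-1} here, with coroot e_{r-1}.\<close>

definition sp_e :: "nat \<Rightarrow> nat \<Rightarrow> rat" where
  "sp_e i = (\<lambda>j. if j = i then 1 else 0)"

definition sp_smul :: "rat \<Rightarrow> (nat \<Rightarrow> rat) \<Rightarrow> (nat \<Rightarrow> rat)" where
  "sp_smul c v = (\<lambda>j. c * v j)"

definition sp_Y :: "nat \<Rightarrow> (nat \<Rightarrow> rat) set" where
  "sp_Y r = {y. (\<forall>i. y i \<in> \<int>) \<and> (\<forall>i\<ge>r. y i = 0)}"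

definition sp_pair :: "nat \<Rightarrow> (nat \<Rightarrow> rat) \<Rightarrow> (nat \<Rightarrow> rat) \<Rightarrow> rat" where
  "sp_pair r x y = (\<Sum>i<r. x i * y i)"

definition sp_pos_roots :: "nat \<Rightarrow> ((nat \<Rightarrow> rat) \<times> (nat \<Rightarrow> rat)) set" where
  "sp_pos_roots r =
     {(sp_e i - sp_e j, sp_e i - sp_e j) | i j. i < j \<and> j < r}
   \<union> {(sp_e i + sp_e j, sp_e i + sp_e j) | i j. i < j \<and> j < r}
   \<union> {(sp_smul 2 (sp_e i), sp_e i) | i. i < r}"

definition sp_roots :: "nat \<Rightarrow> ((nat \<Rightarrow> rat) \<times> (nat \<Rightarrow> rat)) set" where
  "sp_roots r = sp_pos_roots r \<union> {(- a, - c) | a c. (a, c) \<in> sp_pos_roots r}"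

definition sp_simple_coroot :: "nat \<Rightarrow> nat \<Rightarrow> (nat \<Rightarrow> rat)" where
  "sp_simple_coroot r i = (if i + 1 < r then sp_e i - sp_e (i + 1) else sp_e i)"

definition sp_refl :: "nat \<Rightarrow> (nat \<Rightarrow> rat) \<times> (nat \<Rightarrow> rat) \<Rightarrow> (nat \<Rightarrow> rat) \<Rightarrow> (nat \<Rightarrow> rat)" where
  "sp_refl r p y = y - sp_smul (sp_pair r (fst p) y) (snd p)"

inductive_set sp_Weyl :: "nat \<Rightarrow> ((nat \<Rightarrow> rat) \<Rightarrow> (nat \<Rightarrow> rat)) set" for r where
  id_in: "id \<in> sp_Weyl r"
| refl_in: "w \<in> sp_Weyl r \<Longrightarrow> p \<in> sp_roots r \<Longrightarrow> sp_refl r p \<circ> w \<in> sp_Weyl r"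

definition sp_rho :: "nat \<Rightarrow> (nat \<Rightarrow> rat)" where
  "sp_rho r = sp_smul (1/2) (\<Sum>p\<in>sp_pos_roots r. snd p)"

definition sp_twisted :: "nat \<Rightarrow> ((nat \<Rightarrow> rat) \<Rightarrow> (nat \<Rightarrow> rat)) \<Rightarrow> (nat \<Rightarrow> rat) \<Rightarrow> (nat \<Rightarrow> rat)" where
  "sp_twisted r w y = w (y - sp_rho r) + sp_rho r"

definition sp_Q :: "nat \<Rightarrow> (nat \<Rightarrow> rat) \<Rightarrow> rat" where
  "sp_Q r y = (\<Sum>i<r. (y i)^2)"

definition sp_BQ :: "nat \<Rightarrow> (nat \<Rightarrow> rat) \<Rightarrow> (nat \<Rightarrow> rat) \<Rightarrow> rat" where
  "sp_BQ r y z = sp_Q r (y + z) - sp_Q r y - sp_Q r z"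

definition sp_YQn :: "nat \<Rightarrow> nat \<Rightarrow> (nat \<Rightarrow> rat) set" where
  "sp_YQn r n = {y \<in> sp_Y r. \<forall>z\<in>sp_Y r. \<exists>k::int. sp_BQ r y z = of_int (int n * k)}"

definition sp_nalpha :: "nat \<Rightarrow> nat \<Rightarrow> nat \<Rightarrow> rat" where
  "sp_nalpha r n i = of_nat n / of_int (gcd (int n) \<lfloor>sp_Q r (sp_simple_coroot r i)\<rfloor>)"

definition sp_Ysc :: "nat \<Rightarrow> nat \<Rightarrow> (nat \<Rightarrow> rat) set" where
  "sp_Ysc r n = {(\<Sum>i<r. sp_smul (of_int (k i) * sp_nalpha r n i) (sp_simple_coroot r i)) | k :: nat \<Rightarrow> int. True}"

definition sp_stab :: "nat \<Rightarrow> (nat \<Rightarrow> rat) set \<Rightarrow> (nat \<Rightarrow> rat) \<Rightarrow> ((nat \<Rightarrow> rat) \<Rightarrow> (nat \<Rightarrow> rat)) set" where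
  "sp_stab r L y = {w \<in> sp_Weyl r. sp_twisted r w y - y \<in> L}"

definition sp_persistent :: "nat \<Rightarrow> nat \<Rightarrow> bool" where
  "sp_persistent r n = (\<forall>y\<in>sp_Y r. sp_stab r (sp_Ysc r n) y = sp_stab r (sp_YQn r n) y)"

end

theory Submission
  imports Defs
begin

text \<open>Write n = 2N with N even. Since Q is the sum of squares, Y_{Q,n} = N Z^r, whereas
  n_alpha = N for the short simple roots and n_alpha = n for the long one, so Y^sc_{Q,n} consists
  of the vectors N m with sum_i m_i even; in particular Y^sc_{Q,n} is contained in Y_{Q,n}.
  Conversely, let w[y] - y = N m and v = y - rho^vee. Weyl invariance of Q gives
  Q(v + N m) = Q(v), that is N sum_i m_i (2 v_i) + N^2 sum_i m_i^2 = 0. Every 2 v_i is odd,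
  because rho^vee_i = r - i - 1/2, and N is even; hence sum_i m_i is congruent to
  sum_i m_i (2 v_i) = - N sum_i m_i^2, which is even.\<close>

lemma sum_fun_apply: "(\<Sum>a\<in>A. f a) x = (\<Sum>a\<in>A. f a x)"
  by (induction A rule: infinite_finite_induct) auto

lemma sp_pair_e: "sp_pair r (sp_e i) y = (if i < r then y i else 0)"
  unfolding sp_pair_def sp_e_def by (simp add: if_distrib[of "\<lambda>x. x * _"] cong: if_cong)

lemma sp_pair_uminus_left: "sp_pair r (- a) y = - sp_pair r a y"
  unfolding sp_pair_def by (simp add: sum_negf)

lemma sp_pair_smul_left: "sp_pair r (sp_smul t a) y = t * sp_pair r a y"
  unfolding sp_pair_def sp_smul_def by (simp add: sum_distrib_left mult.assoc)

lemma sp_Q_uminus: "sp_Q r (- y) = sp_Q r y"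
  unfolding sp_Q_def by simp

lemma sp_Q_add: "sp_Q r (y + z) = sp_Q r y + 2 * sp_pair r y z + sp_Q r z"
  unfolding sp_Q_def sp_pair_def
  by (simp add: power2_sum sum.distrib sum_distrib_left mult.assoc)

lemma sp_Q_diff_smul: "sp_Q r (y - sp_smul s c) = sp_Q r y - 2 * s * sp_pair r c y + s^2 * sp_Q r c"
proof -
  have "sp_Q r (y - sp_smul s c) = (\<Sum>i<r. (y i)^2 - 2 * s * (c i * y i) + s^2 * (c i)^2)"
    unfolding sp_Q_def sp_smul_def by (intro sum.cong) (auto simp: power2_eq_square algebra_simps)
  also have "\<dots> = sp_Q r y - 2 * s * sp_pair r c y + s^2 * sp_Q r c"
    unfolding sp_Q_def sp_pair_def by (simp add: sum.distrib sum_subtractf sum_distrib_left)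
  finally show ?thesis .
qed

lemma sp_BQ_eq: "sp_BQ r y z = 2 * sp_pair r y z"
  unfolding sp_BQ_def by (simp add: sp_Q_add)

lemma sp_Q_e: "i < r \<Longrightarrow> sp_Q r (sp_e i) = 1"
  unfolding sp_Q_def sp_e_def by (simp add: if_distrib[of "\<lambda>x. x ^ _"] cong: if_cong)

lemma sp_Q_e_add_e:
  assumes "i < r" "j < r" "i \<noteq> j"
  shows "sp_Q r (sp_e i + sp_e j) = 2" and "sp_Q r (sp_e i - sp_e j) = 2"
proof -
  have "sp_pair r (sp_e i) (sp_e j) = 0" "sp_pair r (sp_e i) (- sp_e j) = 0"
    unfolding sp_pair_e using assms by (simp_all add: sp_e_def)
  then show "sp_Q r (sp_e i + sp_e j) = 2" "sp_Q r (sp_e i - sp_e j) = 2"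
    using assms sp_Q_add[of r "sp_e i" "sp_e j"] sp_Q_add[of r "sp_e i" "- sp_e j"]
    by (simp_all add: sp_Q_e sp_Q_uminus)
qed

lemma sp_Q_refl:
  assumes "\<And>y. sp_pair r a y = t * sp_pair r c y" and "t * sp_Q r c = 2"
  shows "sp_Q r (sp_refl r (a, c) y) = sp_Q r y"
proof -
  have "sp_Q r (sp_refl r (a, c) y)
      = sp_Q r y - (sp_pair r c y)^2 * t * (2 - t * sp_Q r c)"
    unfolding sp_refl_def by (simp add: sp_Q_diff_smul assms(1) power2_eq_square algebra_simps)
  then show ?thesis using assms(2) by simp
qed

lemma sp_Q_refl_pos_root:
  assumes "p \<in> sp_pos_roots r"
  shows "sp_Q r (sp_refl r p y) = sp_Q r y"
  using assms unfolding sp_pos_roots_def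
proof (elim UnE CollectE exE conjE)
  fix i j assume "p = (sp_e i - sp_e j, sp_e i - sp_e j)" "i < j" "j < r"
  then show ?thesis by (simp add: sp_Q_refl[where t=1] sp_Q_e_add_e)
next
  fix i j assume "p = (sp_e i + sp_e j, sp_e i + sp_e j)" "i < j" "j < r"
  then show ?thesis by (simp add: sp_Q_refl[where t=1] sp_Q_e_add_e)
next
  fix i assume "p = (sp_smul 2 (sp_e i), sp_e i)" "i < r"
  then show ?thesis by (simp add: sp_Q_refl[where t=2] sp_Q_e sp_pair_smul_left)
qed

lemma sp_Q_refl_root:
  assumes "p \<in> sp_roots r"
  shows "sp_Q r (sp_refl r p y) = sp_Q r y"
proof -
  have "sp_refl r (- a, - c) = sp_refl r (a, c)" for a c
    unfolding sp_refl_def sp_smul_def by (auto simp: sp_pair_uminus_left fun_eq_iff)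
  then show ?thesis using assms unfolding sp_roots_def by (auto simp: sp_Q_refl_pos_root)
qed

lemma sp_Q_Weyl_invariant: "w \<in> sp_Weyl r \<Longrightarrow> sp_Q r (w v) = sp_Q r v"
  by (induction rule: sp_Weyl.induct) (auto simp: sp_Q_refl_root)

lemma sp_e_eq_iff: "sp_e i = sp_e a \<longleftrightarrow> i = a"
  by (auto simp: sp_e_def fun_eq_iff split: if_splits)

lemma sp_e_diff_eq_iff:
  assumes "i < j" "a < b"
  shows "sp_e i - sp_e j = sp_e a - sp_e b \<longleftrightarrow> i = a \<and> j = b"
proof
  assume h: "sp_e i - sp_e j = sp_e a - sp_e b"
  have "(sp_e i - sp_e j) i = (sp_e a - sp_e b) i" "(sp_e i - sp_e j) j = (sp_e a - sp_e b) j"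
    using h by simp_all
  with assms show "i = a \<and> j = b" by (auto simp: sp_e_def split: if_splits)
qed simp

lemma sp_e_add_eq_iff:
  assumes "i < j" "a < b"
  shows "sp_e i + sp_e j = sp_e a + sp_e b \<longleftrightarrow> i = a \<and> j = b"
proof
  assume h: "sp_e i + sp_e j = sp_e a + sp_e b"
  have "(sp_e i + sp_e j) i = (sp_e a + sp_e b) i" "(sp_e i + sp_e j) j = (sp_e a + sp_e b) j"
    using h by simp_all
  with assms show "i = a \<and> j = b" by (auto simp: sp_e_def split: if_splits)
qed simp

lemma sp_e_diff_neq_add: "i < j \<Longrightarrow> sp_e i - sp_e j \<noteq> sp_e a + sp_e b"
proof
  assume "i < j" and "sp_e i - sp_e j = sp_e a + sp_e b"
  then have "(sp_e i - sp_e j) j = (sp_e a + sp_e b) j" by simp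
  with \<open>i < j\<close> show False by (auto simp: sp_e_def split: if_splits)
qed

lemma sp_e_neq_diff: "i < j \<Longrightarrow> sp_e a \<noteq> sp_e i - sp_e j"
proof
  assume "i < j" and "sp_e a = sp_e i - sp_e j"
  then have "sp_e a j = (sp_e i - sp_e j) j" by simp
  with \<open>i < j\<close> show False by (auto simp: sp_e_def split: if_splits)
qed

lemma sp_e_neq_add: "i < j \<Longrightarrow> sp_e a \<noteq> sp_e i + sp_e j"
proof
  assume "i < j" and "sp_e a = sp_e i + sp_e j"
  then have "sp_e a i = (sp_e i + sp_e j) i" "sp_e a j = (sp_e i + sp_e j) j"
    by simp_all
  with \<open>i < j\<close> show False by (auto simp: sp_e_def split: if_splits)
qed

lemma finite_ordered_pairs_less: "finite {(i, j). i < j \<and> j < (r::nat)}"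
  by (rule finite_subset[of _ "{..<r} \<times> {..<r}"]) auto

lemma sum_sp_pos_roots:
  fixes r :: nat and f :: "(nat \<Rightarrow> rat) \<times> (nat \<Rightarrow> rat) \<Rightarrow> 'a::comm_monoid_add"
  defines "I \<equiv> {(i, j). i < j \<and> j < r}"
  shows "(\<Sum>p\<in>sp_pos_roots r. f p) =
      (\<Sum>(i, j)\<in>I. f (sp_e i - sp_e j, sp_e i - sp_e j))
    + (\<Sum>(i, j)\<in>I. f (sp_e i + sp_e j, sp_e i + sp_e j))
    + (\<Sum>i<r. f (sp_smul 2 (sp_e i), sp_e i))"
proof -
  define dif where "dif = (\<lambda>(i, j). (sp_e i - sp_e j, sp_e i - sp_e j))"
  define add where "add = (\<lambda>(i, j). (sp_e i + sp_e j, sp_e i + sp_e j))"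
  define long where "long = (\<lambda>i. (sp_smul 2 (sp_e i), sp_e i))"
  have "inj_on dif I" "inj_on add I" "inj_on long {..<r}"
    by (auto intro!: inj_onI simp: dif_def add_def long_def I_def sp_e_diff_eq_iff sp_e_add_eq_iff sp_e_eq_iff)
  moreover have "dif ` I \<inter> add ` I = {}" "(dif ` I \<union> add ` I) \<inter> long ` {..<r} = {}"
    by (auto simp: dif_def add_def long_def I_def sp_e_diff_neq_add sp_e_neq_diff sp_e_neq_add)
  moreover have "sp_pos_roots r = dif ` I \<union> add ` I \<union> long ` {..<r}"
    unfolding sp_pos_roots_def dif_def add_def long_def I_def by auto
  moreover have "finite I"
    unfolding I_def by (rule finite_ordered_pairs_less)
  ultimately show ?thesis
    by (simp add: sum.union_disjoint sum.reindex dif_def add_def long_def case_prod_unfold)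
qed

lemma sp_rho_coord:
  assumes k: "k < r"
  shows "sp_rho r k = of_nat (r - k) - 1/2"
proof -
  define I where "I = {(i, j). i < j \<and> j < r}"
  have "(\<Sum>(i, j)\<in>I. sp_e i k - sp_e j k) + (\<Sum>(i, j)\<in>I. sp_e i k + sp_e j k)
      = (\<Sum>(i, j)\<in>I. if i = k then 2 else 0)"
    by (simp add: sum.distrib[symmetric] case_prod_unfold sp_e_def) (intro sum.cong, auto)
  also have "\<dots> = (\<Sum>(i, j)\<in>{k} \<times> {k<..<r}. 2)"
    unfolding I_def
    by (rule sum.mono_neutral_cong_right) (auto simp: finite_ordered_pairs_less split: if_splits)
  also have "\<dots> = 2 * of_nat (r - k - 1)"
    by simp
  finally have pairs: "(\<Sum>(i, j)\<in>I. sp_e i k - sp_e j k) + (\<Sum>(i, j)\<in>I. sp_e i k + sp_e j k)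
      = 2 * of_nat (r - k - 1)" .
  have "(\<Sum>i<r. sp_e i k) = 1"
    using k unfolding sp_e_def by (simp add: eq_commute[of k])
  with pairs have "(\<Sum>p\<in>sp_pos_roots r. snd p) k = 2 * of_nat (r - k - 1) + 1"
    unfolding sum_fun_apply sum_sp_pos_roots I_def by (simp add: case_prod_unfold)
  then show ?thesis
    unfolding sp_rho_def sp_smul_def using k by (simp add: of_nat_diff)
qed

lemma sp_e_in_sp_Y: "i < r \<Longrightarrow> sp_e i \<in> sp_Y r"
  unfolding sp_Y_def sp_e_def by auto

lemma sp_Y_coord_eq_0: "y \<in> sp_Y r \<Longrightarrow> r \<le> i \<Longrightarrow> y i = 0"
  unfolding sp_Y_def by auto

lemma sp_Y_coord_of_int_floor: "y \<in> sp_Y r \<Longrightarrow> y i = of_int \<lfloor>y i\<rfloor>"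
  unfolding sp_Y_def by auto

lemma sp_YQn_eq:
  "sp_YQn r (2 * N) = {D \<in> sp_Y r. \<forall>i. \<exists>m::int. D i = of_nat N * of_int m}"
proof (intro set_eqI iffI)
  fix D assume D: "D \<in> sp_YQn r (2 * N)"
  then have DY: "D \<in> sp_Y r" unfolding sp_YQn_def by auto
  have "\<exists>m::int. D i = of_nat N * of_int m" for i
  proof (cases "i < r")
    case True
    then obtain m :: int where "sp_BQ r D (sp_e i) = of_int (int (2 * N) * m)"
      using D sp_e_in_sp_Y unfolding sp_YQn_def by blast
    moreover have "sp_BQ r D (sp_e i) = 2 * D i"
      using True by (simp add: sp_BQ_eq sp_pair_def sp_e_def if_distrib[of "\<lambda>x. _ * x"] cong: if_cong)
    ultimately show ?thesis by auto
  next
    case False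
    then show ?thesis using DY sp_Y_coord_eq_0 by (intro exI[of _ 0]) simp
  qed
  with DY show "D \<in> {D \<in> sp_Y r. \<forall>i. \<exists>m::int. D i = of_nat N * of_int m}" by blast
next
  fix D assume "D \<in> {D \<in> sp_Y r. \<forall>i. \<exists>m::int. D i = of_nat N * of_int m}"
  then have DY: "D \<in> sp_Y r" and coord: "\<forall>i. \<exists>m::int. D i = of_nat N * of_int m"
    by auto
  obtain M where M: "\<And>i. D i = of_nat N * of_int (M i)"
    using choice[OF coord] by blast
  have "\<exists>k::int. sp_BQ r D z = of_int (int (2 * N) * k)" if z: "z \<in> sp_Y r" for z
  proof -
    have "sp_BQ r D z = 2 * (\<Sum>i<r. of_nat N * of_int (M i) * of_int \<lfloor>z i\<rfloor>)"
      unfolding sp_BQ_eq sp_pair_def M by (subst sp_Y_coord_of_int_floor[OF z]) (rule refl)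
    also have "\<dots> = of_int (int (2 * N) * (\<Sum>i<r. M i * \<lfloor>z i\<rfloor>))"
      by (simp add: sum_distrib_left mult.assoc)
    finally show ?thesis by blast
  qed
  with DY show "D \<in> sp_YQn r (2 * N)" unfolding sp_YQn_def by blast
qed

text \<open>Coordinates of n_alpha alpha^vee / N for the simple roots when n = 2N: the coroot
  itself for the short roots (Q(alpha^vee) = 2), twice the coroot for the long one.\<close>
definition sp_sc_coeff :: "nat \<Rightarrow> nat \<Rightarrow> nat \<Rightarrow> int" where
  "sp_sc_coeff r i j =
     (if i + 1 < r then (if j = i then 1 else 0) - (if j = i + 1 then 1 else 0)
      else (if j = i then 2 else 0))"

lemma sp_nalpha_smul_simple_coroot:
  assumes "i < r"
  shows "sp_nalpha r (2 * N) i * sp_simple_coroot r i j = of_nat N * of_int (sp_sc_coeff r i j)"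
proof (cases "i + 1 < r")
  case True
  then have "sp_Q r (sp_simple_coroot r i) = 2"
    by (simp add: sp_simple_coroot_def sp_Q_e_add_e)
  then have "sp_nalpha r (2 * N) i = of_nat N" unfolding sp_nalpha_def by simp
  with True show ?thesis by (simp add: sp_simple_coroot_def sp_sc_coeff_def sp_e_def)
next
  case False
  with assms have "sp_Q r (sp_simple_coroot r i) = 1"
    by (simp add: sp_simple_coroot_def sp_Q_e)
  then have "sp_nalpha r (2 * N) i = 2 * of_nat N" unfolding sp_nalpha_def by simp
  with False show ?thesis by (simp add: sp_simple_coroot_def sp_sc_coeff_def sp_e_def)
qed

lemma sp_Ysc_coord:
  "(\<Sum>i<r. sp_smul (of_int (k i) * sp_nalpha r (2 * N) i) (sp_simple_coroot r i)) j
     = of_nat N * of_int (\<Sum>i<r. k i * sp_sc_coeff r i j)"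
proof -
  have "(\<Sum>i<r. sp_smul (of_int (k i) * sp_nalpha r (2 * N) i) (sp_simple_coroot r i)) j
     = (\<Sum>i<r. of_int (k i) * (sp_nalpha r (2 * N) i * sp_simple_coroot r i j))"
    unfolding sum_fun_apply sp_smul_def by (simp add: mult.assoc)
  also have "\<dots> = (\<Sum>i<r. of_nat N * of_int (k i * sp_sc_coeff r i j))"
    by (intro sum.cong refl) (simp add: sp_nalpha_smul_simple_coroot)
  finally show ?thesis by (simp add: sum_distrib_left)
qed

lemma sp_sc_coeff_eq:
  assumes "i < r" "j < r"
  shows "sp_sc_coeff r i j = (if i = j then (if j + 1 < r then 1 else 2) else 0) - (if i + 1 = j then 1 else 0)"
  using assms unfolding sp_sc_coeff_def by auto

lemma sp_sc_coeff_eq_0: "i < r \<Longrightarrow> r \<le> j \<Longrightarrow> sp_sc_coeff r i j = 0"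
  unfolding sp_sc_coeff_def by auto

lemma sum_sp_sc_coeff: "i < r \<Longrightarrow> (\<Sum>j<r. sp_sc_coeff r i j) = (if i + 1 < r then 0 else 2)"
  unfolding sp_sc_coeff_def by (simp add: sum_subtractf)

lemma sum_mult_sp_sc_coeff:
  assumes "j < r"
  shows "(\<Sum>i<r. k i * sp_sc_coeff r i j)
    = (if j + 1 < r then k j else 2 * k j) - (if 0 < j then k (j - 1) else 0)"
proof -
  have "(\<Sum>i<r. k i * sp_sc_coeff r i j)
      = (\<Sum>i<r. (if i = j then (if j + 1 < r then k j else 2 * k j) else 0)
                 - (if i = j - 1 \<and> 0 < j then k i else 0))"
    using assms by (intro sum.cong) (auto simp: sp_sc_coeff_eq)
  also have "\<dots> = (if j + 1 < r then k j else 2 * k j) - (if 0 < j then k (j - 1) else 0)"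
    using assms by (simp only: sum_subtractf sum.delta) auto
  finally show ?thesis .
qed

lemma sp_sc_coeff_combination_exists:
  fixes M :: "nat \<Rightarrow> int"
  assumes "even (\<Sum>l<r. M l)"
  shows "\<exists>k. \<forall>j<r. (\<Sum>i<r. k i * sp_sc_coeff r i j) = M j"
proof -
  define S where "S m = (\<Sum>l<m. M l)" for m
  \<comment> \<open>Partial sums invert the differences e_i - e_(i+1); halving the last one needs the total to be even.\<close>
  define k where "k i = (if i + 1 < r then S (i + 1) else S r div 2)" for i
  have "(\<Sum>i<r. k i * sp_sc_coeff r i j) = M j" if j: "j < r" for j
  proof -
    have "(if j + 1 < r then k j else 2 * k j) = S (j + 1)"
    proof (cases "j + 1 < r")
      case False
      with j have "r = j + 1" by simp
      with assms show ?thesis by (simp add: k_def S_def)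
    qed (simp add: k_def)
    moreover have "(if 0 < j then k (j - 1) else 0) = S j"
      using j by (auto simp: k_def S_def)
    ultimately show ?thesis
      by (simp add: sum_mult_sp_sc_coeff[OF j] S_def)
  qed
  then show ?thesis by blast
qed

definition sp_even_lattice :: "nat \<Rightarrow> nat \<Rightarrow> (nat \<Rightarrow> rat) set" where
  "sp_even_lattice r N =
     {D \<in> sp_Y r. \<exists>M. (\<forall>i. D i = of_nat N * of_int (M i)) \<and> even (\<Sum>i<r. M i)}"

lemma sp_Ysc_subset_sp_even_lattice: "sp_Ysc r (2 * N) \<subseteq> sp_even_lattice r N"
proof
  fix D assume "D \<in> sp_Ysc r (2 * N)"
  then obtain k where "D = (\<Sum>i<r. sp_smul (of_int (k i) * sp_nalpha r (2 * N) i) (sp_simple_coroot r i))"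
    unfolding sp_Ysc_def by blast
  then have D: "D j = of_nat N * of_int (\<Sum>i<r. k i * sp_sc_coeff r i j)" for j
    by (simp only: sp_Ysc_coord)
  have "D j \<in> \<int>" for j
    unfolding D by (intro Ints_mult Ints_of_nat Ints_of_int)
  then have "D \<in> sp_Y r"
    unfolding sp_Y_def by (auto simp: D sp_sc_coeff_eq_0)
  moreover have "(\<Sum>j<r. \<Sum>i<r. k i * sp_sc_coeff r i j) = (\<Sum>i<r. k i * (\<Sum>j<r. sp_sc_coeff r i j))"
    by (simp only: sum_distrib_left) (rule sum.swap)
  then have "even (\<Sum>j<r. \<Sum>i<r. k i * sp_sc_coeff r i j)"
    by (simp add: sum_sp_sc_coeff dvd_sum)
  ultimately show "D \<in> sp_even_lattice r N"
    unfolding sp_even_lattice_def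
    using D by (intro CollectI conjI exI[of _ "\<lambda>j. \<Sum>i<r. k i * sp_sc_coeff r i j"]) auto
qed

lemma sp_even_lattice_subset_sp_Ysc: "sp_even_lattice r N \<subseteq> sp_Ysc r (2 * N)"
proof
  fix D assume "D \<in> sp_even_lattice r N"
  then obtain M where DY: "D \<in> sp_Y r" and M: "\<And>i. D i = of_nat N * of_int (M i)"
    and ev: "even (\<Sum>i<r. M i)"
    unfolding sp_even_lattice_def by blast
  obtain k where k: "\<And>j. j < r \<Longrightarrow> (\<Sum>i<r. k i * sp_sc_coeff r i j) = M j"
    using sp_sc_coeff_combination_exists[OF ev] by blast
  have "D j = of_nat N * of_int (\<Sum>i<r. k i * sp_sc_coeff r i j)" for j
  proof (cases "j < r")
    case True
    then show ?thesis by (simp add: M k)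
  next
    case False
    then show ?thesis by (simp add: sp_Y_coord_eq_0[OF DY] sp_sc_coeff_eq_0)
  qed
  then have "D = (\<Sum>i<r. sp_smul (of_int (k i) * sp_nalpha r (2 * N) i) (sp_simple_coroot r i))"
    by (simp add: fun_eq_iff sp_Ysc_coord)
  then show "D \<in> sp_Ysc r (2 * N)"
    unfolding sp_Ysc_def by blast
qed

lemma sp_Ysc_eq: "sp_Ysc r (2 * N) = sp_even_lattice r N"
  by (intro equalityI sp_Ysc_subset_sp_even_lattice sp_even_lattice_subset_sp_Ysc)

lemma even_sum_mult_odd_iff:
  fixes M U :: "'i \<Rightarrow> 'a::ring_parity"
  assumes "\<And>i. i \<in> A \<Longrightarrow> odd (U i)"
  shows "even (\<Sum>i\<in>A. M i * U i) \<longleftrightarrow> even (\<Sum>i\<in>A. M i)"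
proof -
  have "even (\<Sum>i\<in>A. M i * (U i - 1))"
    using assms by (intro dvd_sum) simp
  moreover have "(\<Sum>i\<in>A. M i * U i) = (\<Sum>i\<in>A. M i) + (\<Sum>i\<in>A. M i * (U i - 1))"
    by (simp add: sum.distrib[symmetric] algebra_simps)
  ultimately show ?thesis by simp
qed

lemma sp_twisted_displacement_quadratic_eq:
  assumes "w \<in> sp_Weyl r"
  shows "2 * sp_pair r (sp_twisted r w y - y) (y - sp_rho r) + sp_Q r (sp_twisted r w y - y) = 0"
proof -
  define D where "D = sp_twisted r w y - y"
  define v where "v = y - sp_rho r"
  have "w v = v - sp_smul (- 1) D"
    unfolding v_def D_def sp_twisted_def sp_smul_def by (simp add: fun_eq_iff)
  then have "sp_Q r v = sp_Q r v + 2 * sp_pair r D v + sp_Q r D"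
    using sp_Q_Weyl_invariant[OF assms, of v] by (simp add: sp_Q_diff_smul)
  then show ?thesis unfolding D_def v_def by simp
qed

lemma sp_twisted_displacement_sum_even:
  assumes "even N" "0 < N" "w \<in> sp_Weyl r" "y \<in> sp_Y r"
    and M: "\<And>i. (sp_twisted r w y - y) i = of_nat N * of_int (M i)"
  shows "even (\<Sum>i<r. M i)"
proof -
  define U where "U i = 2 * \<lfloor>y i\<rfloor> - 2 * int (r - i) + 1" for i
  have U: "2 * (y - sp_rho r) i = of_int (U i)" if "i < r" for i
    using that sp_Y_coord_of_int_floor[OF assms(4), of i] by (simp add: U_def sp_rho_coord of_nat_diff)
  have "2 * sp_pair r (sp_twisted r w y - y) (y - sp_rho r)
      = (\<Sum>i<r. of_nat N * of_int (M i) * (2 * (y - sp_rho r) i))"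
    unfolding sp_pair_def M by (simp add: sum_distrib_left mult_ac)
  also have "\<dots> = (\<Sum>i<r. of_nat N * (of_int (M i) * of_int (U i)))"
    by (rule sum.cong[OF refl]) (simp add: U[symmetric])
  also have "\<dots> = of_nat N * of_int (\<Sum>i<r. M i * U i)"
    by (simp add: sum_distrib_left)
  moreover have "sp_Q r (sp_twisted r w y - y) = of_nat N * of_int (int N * (\<Sum>i<r. (M i)^2))"
    unfolding sp_Q_def M by (simp add: sum_distrib_left power_mult_distrib power2_eq_square mult_ac)
  ultimately have "of_nat N * of_int ((\<Sum>i<r. M i * U i) + int N * (\<Sum>i<r. (M i)^2)) = (0::rat)"
    using sp_twisted_displacement_quadratic_eq[OF assms(3), of y] by (simp add: distrib_left)
  with assms(2) have "(\<Sum>i<r. M i * U i) + int N * (\<Sum>i<r. (M i)^2) = 0"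
    by (simp only: mult_eq_0_iff of_int_eq_0_iff of_nat_eq_0_iff) simp
  then have "(\<Sum>i<r. M i * U i) = - (int N * (\<Sum>i<r. (M i)^2))"
    by simp
  with assms(1) have "even (\<Sum>i<r. M i * U i)"
    by simp
  then show ?thesis
    by (simp add: even_sum_mult_odd_iff U_def)
qed

lemma sp_twisted_displacement_in_sp_Ysc:
  assumes "even N" "0 < N" "w \<in> sp_Weyl r" "y \<in> sp_Y r"
    and "sp_twisted r w y - y \<in> sp_YQn r (2 * N)"
  shows "sp_twisted r w y - y \<in> sp_Ysc r (2 * N)"
proof -
  have coord: "\<forall>i. \<exists>m::int. (sp_twisted r w y - y) i = of_nat N * of_int m"
    using assms(5) unfolding sp_YQn_eq by blast
  obtain M where "\<And>i. (sp_twisted r w y - y) i = of_nat N * of_int (M i)"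
    using choice[OF coord] by blast
  with sp_twisted_displacement_sum_even[OF assms(1-4)] assms(5) show ?thesis
    unfolding sp_Ysc_eq sp_YQn_eq sp_even_lattice_def by blast
qed

theorem lemma3p4:
  fixes r n :: nat
  assumes "r \<ge> 1" and "n > 0" and "4 dvd n"
  shows "sp_persistent r n"
proof -
  obtain m where "n = 4 * m"
    using assms(3) by (rule dvdE)
  then obtain N where n: "n = 2 * N" and N: "even N" "0 < N"
    using assms(2) by (intro that[of "2 * m"]) auto
  have "sp_Ysc r n \<subseteq> sp_YQn r n"
    unfolding n sp_Ysc_eq sp_YQn_eq sp_even_lattice_def by blast
  with sp_twisted_displacement_in_sp_Ysc[OF N] show ?thesis
    unfolding sp_persistent_def sp_stab_def n by blast
qed

end
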